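(* Let $\sigma,\rho\in\mathbb{R}$ and $\alpha,\beta,\gamma\in\mathbb{C}$. Define the Laurent polynomials $$\eta^{(2)}(\zeta)=\frac{\sigma}{\zeta}\,\frac{(\zeta-\gamma)(\bar\gamma\zeta+1)}{1+|\gamma|^2},\qquad \eta^{(4)}(\zeta)=\frac{\rho}{\zeta^2}\,\frac{(\zeta-\alpha)(\bar\alpha\zeta+1)}{1+|\alpha|^2}\,\frac{(\zeta-\beta)(\bar\beta\zeta+1)}{1+|\beta|^2},$$ and write their expansions as $\eta^{(2)}(\zeta)=\frac{\bar z_1}{\zeta}+x_1-z_1\zeta$ and $\eta^{(4)}(\zeta)=\frac{\bar z_2}{\zeta^2}+\frac{\bar v_2}{\zeta}+x_2-v_2\zeta+z_2\zeta^2$ (so $x_1,x_2\in\mathbb{R}$, $z_1,z_2,v_2\in\mathbb{C}$). Define $$g_{\sigma^2}=4|z_1|^2+x_1^2,\qquad g_{\rho^2}=4|z_2|^2+|v_2|^2+\tfrac13x_2^2,$$ $$g_{\rho\sigma^2}=\tfrac23x_2(x_1^2-2|z_1|^2)+4z_2\bar z_1^2+4\bar z_2z_1^2+2v_2\bar z_1x_1+2\bar v_2z_1x_1,$$ $$g_{\rho^2\sigma^2}=(8|z_2|^2-|v_2|^2-\tfrac23x_2^2)(x_1^2-2|z_1|^2)-12z_2\bar v_2\bar z_1x_1-12\bar z_2v_2z_1x_1+8z_2x_2\bar z_1^2+8\bar z_2x_2z_1^2-2v_2x_2\bar z_1x_1-2\bar v_2x_2z_1x_1-3v_2^2\bar z_1^2-3\bar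 v_2^2z_1^2.$$ For $a,b\in\mathbb{C}$ let $\delta_{ab}=2\arccos\frac{|1+\bar a b|}{\sqrt{(1+|a|^2)(1+|b|^2)}}$ (the Fubini–Study distance on the Riemann sphere), and set $$Q_\pm^2=(\cos\delta_{\alpha\gamma}\pm\cos\delta_{\beta\gamma})^2,\qquad Q_0^2=\det\begin{pmatrix}1&\cos\delta_{\alpha\gamma}&\cos\delta_{\alpha\beta}\\ \cos\delta_{\alpha\gamma}&1&\cos\delta_{\beta\gamma}\\ \cos\delta_{\alpha\beta}&\cos\delta_{\beta\gamma}&1\end{pmatrix}.$$ Then $$g_{\rho\sigma^2}=\rho\sigma^2\Big(\cos\delta_{\alpha\gamma}\cos\delta_{\beta\gamma}-\tfrac13\cos\delta_{\alpha\beta}\Big),\qquad g_{\rho^2\sigma^2}=g_{\rho^2}g_{\sigma^2}+\tfrac14\rho^2\sigma^2\big(Q_0^2-Q_+^2-Q_-^2\big).$$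
   Context: $\eta^{(2)}$ and $\eta^{(4)}$ are real ${\cal O}(2)$ and ${\cal O}(4)$ multiplets in Majorana (root) form; the quantities $g$ are $SU(2)$-invariants built from their coefficients. *)

theory Defs
  imports "HOL-Analysis.Analysis"
begin

definition eta2 :: "real \<Rightarrow> complex \<Rightarrow> complex \<Rightarrow> complex" where
  "eta2 \<sigma> \<gamma> \<zeta> =
     (complex_of_real \<sigma> / \<zeta>) * ((\<zeta> - \<gamma>) * (cnj \<gamma> * \<zeta> + 1) / complex_of_real (1 + (cmod \<gamma>)\<^sup>2))"

definition eta4 :: "real \<Rightarrow> complex \<Rightarrow> complex \<Rightarrow> complex \<Rightarrow> complex" where
  "eta4 \<rho> \<alpha> \<beta> \<zeta> =
     (complex_of_real \<rho> / \<zeta>\<^sup>2)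
     * ((\<zeta> - \<alpha>) * (cnj \<alpha> * \<zeta> + 1) / complex_of_real (1 + (cmod \<alpha>)\<^sup>2))
     * ((\<zeta> - \<beta>) * (cnj \<beta> * \<zeta> + 1) / complex_of_real (1 + (cmod \<beta>)\<^sup>2))"

definition fs_dist :: "complex \<Rightarrow> complex \<Rightarrow> real" where
  "fs_dist a b = 2 * arccos (cmod (1 + cnj a * b) / sqrt ((1 + (cmod a)\<^sup>2) * (1 + (cmod b)\<^sup>2)))"

end

theory Submission
  imports Defs "HOL-Computational_Algebra.Polynomial"
begin

text \<open>Inverse stereographic projection sends a root \<open>a\<close> to a unit vector \<open>n(a)\<close> in \<open>\<real>\<^sup>3\<close>, and
\<open>cos (fs_dist a b)\<close> is the inner product \<open>n(a) \<cdot> n(b)\<close>. The coefficients of \<open>eta2 \<sigma> \<gamma>\<close> are the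
components of \<open>\<sigma> n(\<gamma>)\<close>; since \<open>eta4 \<rho> \<alpha> \<beta> = \<rho> eta2 1 \<alpha> eta2 1 \<beta>\<close>, the coefficients of
\<open>eta4\<close> are those of \<open>\<rho>\<close> times the traceless symmetric product of \<open>n(\<alpha>)\<close> and \<open>n(\<beta>)\<close>. Each
invariant is therefore a polynomial in the three inner products, and both identities become
polynomial identities modulo \<open>|n(\<alpha>)| = |n(\<beta>)| = |n(\<gamma>)| = 1\<close>.\<close>

lemma poly_eq_0_if_vanishes_off_0:
  fixes p :: "'a::{idom,ring_char_0} poly"
  assumes "\<And>x. x \<noteq> 0 \<Longrightarrow> poly p x = 0"
  shows "p = 0"
proof (rule ccontr)
  assume "p \<noteq> 0"
  then have "finite {x. poly p x = 0}" by (rule poly_roots_finite)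
  moreover have "UNIV - {0} \<subseteq> {x. poly p x = 0}" using assms by auto
  ultimately have "finite (UNIV :: 'a set)" by (metis finite_Diff2 finite.emptyI finite_insert finite_subset)
  then show False using infinite_UNIV_char_0 by blast
qed

lemma laurent_coeffs_unique:
  fixes a0 a1 a2 a3 a4 b0 b1 b2 b3 b4 :: "'a::field_char_0"
  assumes "\<And>x. x \<noteq> 0 \<Longrightarrow>
    a0 / x\<^sup>2 + a1 / x + a2 + a3 * x + a4 * x\<^sup>2 = b0 / x\<^sup>2 + b1 / x + b2 + b3 * x + b4 * x\<^sup>2"
  shows "a0 = b0" "a1 = b1" "a2 = b2" "a3 = b3" "a4 = b4"
proof -
  let ?p = "[:a0 - b0, a1 - b1, a2 - b2, a3 - b3, a4 - b4:]"
  have "poly ?p x = 0" if "x \<noteq> 0" for x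
  proof -
    have "poly ?p x = x\<^sup>2 * ((a0 / x\<^sup>2 + a1 / x + a2 + a3 * x + a4 * x\<^sup>2)
                           - (b0 / x\<^sup>2 + b1 / x + b2 + b3 * x + b4 * x\<^sup>2))"
      using that by (simp add: field_simps power2_eq_square)
    then show ?thesis using assms[OF that] by simp
  qed
  then have "?p = 0" by (rule poly_eq_0_if_vanishes_off_0)
  then show "a0 = b0" "a1 = b1" "a2 = b2" "a3 = b3" "a4 = b4" by simp_all
qed

lemma of_real_Re: "complex_of_real (Re z) = (z + cnj z) / 2"
  by (simp add: complex_add_cnj)

lemma of_real_cmod_power2: "(complex_of_real (cmod z))\<^sup>2 = z * cnj z"
  by (metis complex_norm_square of_real_power)

lemmas of_real_arith = of_real_add of_real_diff of_real_minus of_real_mult of_real_divide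
  of_real_power of_real_numeral of_real_1

lemma mult_cnj_add_power2_eq_1:
  "(cmod A)\<^sup>2 + a\<^sup>2 = 1 \<Longrightarrow> A * cnj A + (complex_of_real a)\<^sup>2 = 1"
  by (metis complex_norm_square of_real_1 of_real_add of_real_power)

text \<open>\<open>(sphere_xy a, sphere_z a)\<close> is the point of the unit sphere corresponding to \<open>a\<close> under
inverse stereographic projection, with its horizontal part written as a complex number
(conjugated, to match the coefficient conventions of the multiplets).\<close>

definition sphere_xy :: "complex \<Rightarrow> complex" where
  "sphere_xy a = 2 * cnj a / of_real (1 + (cmod a)\<^sup>2)"

definition sphere_z :: "complex \<Rightarrow> real" where
  "sphere_z a = (1 - (cmod a)\<^sup>2) / (1 + (cmod a)\<^sup>2)"

lemma one_plus_cmod_sq_neq_0: "complex_of_real (1 + (cmod a)\<^sup>2) \<noteq> 0"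
  by (metis add_pos_nonneg of_real_eq_0_iff zero_le_power2 zero_less_one less_irrefl)

lemma of_real_one_plus_cmod_sq: "complex_of_real (1 + (cmod a)\<^sup>2) = 1 + a * cnj a"
  by (simp only: of_real_add of_real_1 complex_norm_square)

lemma sphere_norm: "(cmod (sphere_xy a))\<^sup>2 + (sphere_z a)\<^sup>2 = 1"
proof -
  have N: "1 + (cmod a)\<^sup>2 > 0" by (simp add: add_pos_nonneg)
  then have "cmod (sphere_xy a) = 2 * cmod a / (1 + (cmod a)\<^sup>2)"
    unfolding sphere_xy_def by (simp only: norm_divide norm_mult norm_of_real complex_mod_cnj) simp
  with N show ?thesis
    unfolding sphere_z_def by (simp add: power_divide divide_simps) algebra
qed

lemma norm_sq_one_plus_cnj_mult:
  "(cmod (1 + cnj a * b))\<^sup>2 + (cmod (a - b))\<^sup>2 = (1 + (cmod a)\<^sup>2) * (1 + (cmod b)\<^sup>2)"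
proof -
  have "complex_of_real ((cmod (1 + cnj a * b))\<^sup>2 + (cmod (a - b))\<^sup>2)
      = complex_of_real ((1 + (cmod a)\<^sup>2) * (1 + (cmod b)\<^sup>2))"
    by (simp only: of_real_add of_real_mult of_real_1 complex_norm_square) (simp; algebra)
  then show ?thesis by (rule of_real_eq_iff[THEN iffD1])
qed

lemma cos_fs_dist_eq_norm_sq:
  "cos (fs_dist a b) = 2 * (cmod (1 + cnj a * b))\<^sup>2 / ((1 + (cmod a)\<^sup>2) * (1 + (cmod b)\<^sup>2)) - 1"
proof -
  define P where "P = (1 + (cmod a)\<^sup>2) * (1 + (cmod b)\<^sup>2)"
  define t where "t = cmod (1 + cnj a * b) / sqrt P"
  have P: "P > 0" unfolding P_def by (simp add: add_pos_nonneg)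
  have "cmod (1 + cnj a * b) \<le> sqrt P"
    using norm_sq_one_plus_cnj_mult[of a b] unfolding P_def
    by (intro real_le_rsqrt) (metis le_add_same_cancel1 zero_le_power2)
  then have "0 \<le> t" "t \<le> 1" using P unfolding t_def by simp_all
  moreover have "t\<^sup>2 = (cmod (1 + cnj a * b))\<^sup>2 / P" using P unfolding t_def by (simp add: power_divide)
  ultimately show ?thesis
    unfolding fs_dist_def t_def[symmetric] P_def[symmetric] by (simp add: cos_double_cos)
qed

lemma cos_fs_dist: "cos (fs_dist a b) = Re (sphere_xy a * cnj (sphere_xy b)) + sphere_z a * sphere_z b"
proof -
  define Na where "Na = complex_of_real (1 + (cmod a)\<^sup>2)"
  define Nb where "Nb = complex_of_real (1 + (cmod b)\<^sup>2)"
  have N: "Na \<noteq> 0" "Nb \<noteq> 0" "cnj Na = Na" "cnj Nb = Nb"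
    unfolding Na_def Nb_def using one_plus_cmod_sq_neq_0 by (simp_all only: complex_cnj_complex_of_real) simp_all
  have N_eq: "Na = 1 + a * cnj a" "Nb = 1 + b * cnj b"
    unfolding Na_def Nb_def by (simp_all only: of_real_one_plus_cmod_sq)
  have "complex_of_real (cos (fs_dist a b))
      = 2 * ((1 + cnj a * b) * cnj (1 + cnj a * b)) / (Na * Nb) - 1"
    unfolding cos_fs_dist_eq_norm_sq Na_def Nb_def
    by (simp only: of_real_diff of_real_divide of_real_mult of_real_1 of_real_numeral
        complex_norm_square)
  also have "\<dots> = ((2 * cnj a / Na) * cnj (2 * cnj b / Nb) + cnj ((2 * cnj a / Na) * cnj (2 * cnj b / Nb))) / 2
      + ((1 - a * cnj a) / Na) * ((1 - b * cnj b) / Nb)"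
    using N by (simp add: field_simps) (use N_eq in algebra)
  also have "\<dots> = complex_of_real (Re (sphere_xy a * cnj (sphere_xy b)) + sphere_z a * sphere_z b)"
    unfolding sphere_xy_def Na_def[symmetric] Nb_def[symmetric]
    unfolding sphere_z_def of_real_add of_real_mult of_real_Re
    by (simp only: of_real_divide of_real_diff of_real_1 complex_norm_square Na_def[symmetric] Nb_def[symmetric])
  finally show ?thesis by (rule of_real_eq_iff[THEN iffD1])
qed

lemma eta2_expansion:
  assumes "\<zeta> \<noteq> 0"
  shows "eta2 \<sigma> \<gamma> \<zeta> = of_real \<sigma> *
    (- cnj (sphere_xy \<gamma>) / (2 * \<zeta>) + of_real (sphere_z \<gamma>) + sphere_xy \<gamma> * \<zeta> / 2)"
proof -
  define N where "N = complex_of_real (1 + (cmod \<gamma>)\<^sup>2)"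
  have N: "N \<noteq> 0" "cnj N = N"
    unfolding N_def using one_plus_cmod_sq_neq_0 by simp_all
  have N_eq: "N = 1 + \<gamma> * cnj \<gamma>"
    unfolding N_def by (rule of_real_one_plus_cmod_sq)
  have "complex_of_real (sphere_z \<gamma>) = (1 - \<gamma> * cnj \<gamma>) / N"
    unfolding sphere_z_def N_def by (simp only: of_real_divide of_real_diff of_real_1 complex_norm_square)
  then show ?thesis
    using assms N unfolding eta2_def sphere_xy_def N_def[symmetric]
    by (simp add: field_simps) (use N_eq in algebra)
qed

lemma eta4_eq_mult_eta2: "eta4 \<rho> \<alpha> \<beta> \<zeta> = of_real \<rho> * eta2 1 \<alpha> \<zeta> * eta2 1 \<beta> \<zeta>"
  unfolding eta2_def eta4_def by (simp add: power2_eq_square)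

lemma eta4_expansion:
  assumes "\<zeta> \<noteq> 0"
  shows "eta4 \<rho> \<alpha> \<beta> \<zeta> = of_real \<rho> *
    (cnj (sphere_xy \<alpha> * sphere_xy \<beta>) / (4 * \<zeta>\<^sup>2)
     - (cnj (sphere_xy \<alpha>) * of_real (sphere_z \<beta>) + of_real (sphere_z \<alpha>) * cnj (sphere_xy \<beta>)) / (2 * \<zeta>)
     + of_real (sphere_z \<alpha> * sphere_z \<beta> - Re (sphere_xy \<alpha> * cnj (sphere_xy \<beta>)) / 2)
     + (sphere_xy \<alpha> * of_real (sphere_z \<beta>) + of_real (sphere_z \<alpha>) * sphere_xy \<beta>) * \<zeta> / 2
     + sphere_xy \<alpha> * sphere_xy \<beta> * \<zeta>\<^sup>2 / 4)"
  unfolding eta4_eq_mult_eta2 eta2_expansion[OF assms] of_real_diff of_real_mult of_real_divide of_real_Re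
  using assms by (simp add: field_simps power2_eq_square)

lemma eta2_coeffs:
  assumes "\<And>\<zeta>. \<zeta> \<noteq> 0 \<Longrightarrow> eta2 \<sigma> \<gamma> \<zeta> = cnj z1 / \<zeta> + complex_of_real x1 - z1 * \<zeta>"
  shows "z1 = - of_real \<sigma> * sphere_xy \<gamma> / 2" and "x1 = \<sigma> * sphere_z \<gamma>"
proof -
  have laurent: "0 / \<zeta>\<^sup>2 + cnj z1 / \<zeta> + of_real x1 + (- z1) * \<zeta> + 0 * \<zeta>\<^sup>2
      = 0 / \<zeta>\<^sup>2 + (- of_real \<sigma> * cnj (sphere_xy \<gamma>) / 2) / \<zeta> + of_real (\<sigma> * sphere_z \<gamma>)
        + (- (- of_real \<sigma> * sphere_xy \<gamma> / 2)) * \<zeta> + 0 * \<zeta>\<^sup>2" if "\<zeta> \<noteq> 0" for \<zeta>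
    using assms[OF that] eta2_expansion[OF that] by (simp add: field_simps)
  have "complex_of_real x1 = of_real (\<sigma> * sphere_z \<gamma>)" and "- z1 = - (- of_real \<sigma> * sphere_xy \<gamma> / 2)"
    by (rule laurent_coeffs_unique, erule laurent)+
  then show "z1 = - of_real \<sigma> * sphere_xy \<gamma> / 2" and "x1 = \<sigma> * sphere_z \<gamma>"
    by (simp_all only: of_real_eq_iff neg_equal_iff_equal)
qed

lemma eta4_coeffs:
  assumes "\<And>\<zeta>. \<zeta> \<noteq> 0 \<Longrightarrow>
    eta4 \<rho> \<alpha> \<beta> \<zeta> = cnj z2 / \<zeta>\<^sup>2 + cnj v2 / \<zeta> + complex_of_real x2 - v2 * \<zeta> + z2 * \<zeta>\<^sup>2"
  shows "z2 = of_real \<rho> * sphere_xy \<alpha> * sphere_xy \<beta> / 4"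
    and "v2 = - of_real \<rho> * (sphere_xy \<alpha> * of_real (sphere_z \<beta>) + of_real (sphere_z \<alpha>) * sphere_xy \<beta>) / 2"
    and "x2 = \<rho> * (sphere_z \<alpha> * sphere_z \<beta> - Re (sphere_xy \<alpha> * cnj (sphere_xy \<beta>)) / 2)"
proof -
  define A where "A = sphere_xy \<alpha>"
  define B where "B = sphere_xy \<beta>"
  define a where "a = complex_of_real (sphere_z \<alpha>)"
  define b where "b = complex_of_real (sphere_z \<beta>)"
  have laurent: "cnj z2 / \<zeta>\<^sup>2 + cnj v2 / \<zeta> + of_real x2 + (- v2) * \<zeta> + z2 * \<zeta>\<^sup>2
      = (of_real \<rho> * cnj (A * B) / 4) / \<zeta>\<^sup>2 + (- of_real \<rho> * (cnj A * b + a * cnj B) / 2) / \<zeta>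
        + of_real (\<rho> * (sphere_z \<alpha> * sphere_z \<beta> - Re (A * cnj B) / 2))
        + (- (- of_real \<rho> * (A * b + a * B) / 2)) * \<zeta> + (of_real \<rho> * A * B / 4) * \<zeta>\<^sup>2"
    if "\<zeta> \<noteq> 0" for \<zeta>
  proof -
    have "cnj z2 / \<zeta>\<^sup>2 + cnj v2 / \<zeta> + of_real x2 + (- v2) * \<zeta> + z2 * \<zeta>\<^sup>2 = eta4 \<rho> \<alpha> \<beta> \<zeta>"
      using assms[OF that] by simp
    also have "\<dots> = (of_real \<rho> * cnj (A * B) / 4) / \<zeta>\<^sup>2 + (- of_real \<rho> * (cnj A * b + a * cnj B) / 2) / \<zeta>
        + of_real (\<rho> * (sphere_z \<alpha> * sphere_z \<beta> - Re (A * cnj B) / 2))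
        + (- (- of_real \<rho> * (A * b + a * B) / 2)) * \<zeta> + (of_real \<rho> * A * B / 4) * \<zeta>\<^sup>2"
      unfolding eta4_expansion[OF that] A_def B_def a_def b_def using that
      by (simp only: of_real_mult) (simp add: field_simps)
    finally show ?thesis .
  qed
  have "complex_of_real x2 = of_real (\<rho> * (sphere_z \<alpha> * sphere_z \<beta> - Re (A * cnj B) / 2))"
    and "- v2 = - (- of_real \<rho> * (A * b + a * B) / 2)" and "z2 = of_real \<rho> * A * B / 4"
    by (rule laurent_coeffs_unique, erule laurent)+
  then show "z2 = of_real \<rho> * sphere_xy \<alpha> * sphere_xy \<beta> / 4"
    and "v2 = - of_real \<rho> * (sphere_xy \<alpha> * of_real (sphere_z \<beta>) + of_real (sphere_z \<alpha>) * sphere_xy \<beta>) / 2"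
    and "x2 = \<rho> * (sphere_z \<alpha> * sphere_z \<beta> - Re (sphere_xy \<alpha> * cnj (sphere_xy \<beta>)) / 2)"
    unfolding A_def B_def a_def b_def by (simp_all only: of_real_eq_iff neg_equal_iff_equal)
qed

lemma g_sigma2_eq:
  fixes C z1 :: complex and c \<sigma> x1 :: real
  assumes "(cmod C)\<^sup>2 + c\<^sup>2 = 1" and "z1 = - of_real \<sigma> * C / 2" and "x1 = \<sigma> * c"
  shows "4 * (cmod z1)\<^sup>2 + x1\<^sup>2 = \<sigma>\<^sup>2"
proof -
  have "4 * (cmod z1)\<^sup>2 + x1\<^sup>2 = \<sigma>\<^sup>2 * ((cmod C)\<^sup>2 + c\<^sup>2)"
    using assms(2,3) by (simp add: norm_mult norm_divide power_mult_distrib power_divide algebra_simps)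
  then show ?thesis using assms(1) by simp
qed

lemma g_rho2_eq:
  fixes A B z2 v2 :: complex and a b \<rho> x2 cab :: real
  assumes unit: "(cmod A)\<^sup>2 + a\<^sup>2 = 1" "(cmod B)\<^sup>2 + b\<^sup>2 = 1"
    and z2: "z2 = of_real \<rho> * A * B / 4"
    and v2: "v2 = - of_real \<rho> * (A * of_real b + of_real a * B) / 2"
    and x2: "x2 = \<rho> * (a * b - Re (A * cnj B) / 2)"
    and cab: "cab = Re (A * cnj B) + a * b"
  shows "4 * (cmod z2)\<^sup>2 + (cmod v2)\<^sup>2 + 1/3 * x2\<^sup>2 = \<rho>\<^sup>2 * (3 + cab\<^sup>2) / 12"
proof -
  have "complex_of_real (4 * (cmod z2)\<^sup>2 + (cmod v2)\<^sup>2 + 1/3 * x2\<^sup>2)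
      = complex_of_real (\<rho>\<^sup>2 * (3 + cab\<^sup>2) / 12)"
    unfolding x2 cab z2 v2
    using mult_cnj_add_power2_eq_1[OF unit(1)] mult_cnj_add_power2_eq_1[OF unit(2)]
    by (simp only: of_real_arith of_real_cmod_power2 of_real_Re) (simp add: field_simps, algebra)
  then show ?thesis by (rule of_real_eq_iff[THEN iffD1])
qed

context
  fixes A B C z1 z2 v2 :: complex and a b c \<sigma> \<rho> x1 x2 cag cbg cab :: real
  assumes unit: "(cmod A)\<^sup>2 + a\<^sup>2 = 1" "(cmod B)\<^sup>2 + b\<^sup>2 = 1" "(cmod C)\<^sup>2 + c\<^sup>2 = 1"
    and z1: "z1 = - of_real \<sigma> * C / 2" and x1: "x1 = \<sigma> * c"
    and z2: "z2 = of_real \<rho> * A * B / 4"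
    and v2: "v2 = - of_real \<rho> * (A * of_real b + of_real a * B) / 2"
    and x2: "x2 = \<rho> * (a * b - Re (A * cnj B) / 2)"
    and cag: "cag = Re (A * cnj C) + a * c" and cbg: "cbg = Re (B * cnj C) + b * c"
    and cab: "cab = Re (A * cnj B) + a * b"
begin

lemmas unit_cnj = unit[THEN mult_cnj_add_power2_eq_1]

lemma g_rho_sigma2_eq:
  "complex_of_real (2/3 * x2 * (x1\<^sup>2 - 2 * (cmod z1)\<^sup>2))
     + 4 * z2 * (cnj z1)\<^sup>2 + 4 * cnj z2 * z1\<^sup>2
     + 2 * v2 * cnj z1 * complex_of_real x1 + 2 * cnj v2 * z1 * complex_of_real x1
   = complex_of_real (\<rho> * \<sigma>\<^sup>2 * (cag * cbg - 1/3 * cab))"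
  unfolding x1 x2 cag cbg cab z1 z2 v2 using unit_cnj
  by (simp only: of_real_arith of_real_cmod_power2 of_real_Re) (simp add: field_simps, algebra)

lemma g_rho2_sigma2_eq:
  "complex_of_real ((8 * (cmod z2)\<^sup>2 - (cmod v2)\<^sup>2 - 2/3 * x2\<^sup>2) * (x1\<^sup>2 - 2 * (cmod z1)\<^sup>2))
     - 12 * z2 * cnj v2 * cnj z1 * complex_of_real x1
     - 12 * cnj z2 * v2 * z1 * complex_of_real x1
     + 8 * z2 * complex_of_real x2 * (cnj z1)\<^sup>2
     + 8 * cnj z2 * complex_of_real x2 * z1\<^sup>2
     - 2 * v2 * complex_of_real x2 * cnj z1 * complex_of_real x1
     - 2 * cnj v2 * complex_of_real x2 * z1 * complex_of_real x1
     - 3 * v2\<^sup>2 * (cnj z1)\<^sup>2 - 3 * (cnj v2)\<^sup>2 * z1\<^sup>2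
   = complex_of_real (\<rho>\<^sup>2 * \<sigma>\<^sup>2 *
       (6 - 2 * cab\<^sup>2 + 6 * cag * cbg * cab - 9 * cag\<^sup>2 - 9 * cbg\<^sup>2) / 12)"
  unfolding x1 x2 cag cbg cab z1 z2 v2 using unit_cnj
  by (simp only: of_real_arith of_real_cmod_power2 of_real_Re) (simp add: field_simps, algebra)

end

theorem mainTheorem1:
  fixes \<sigma> \<rho> x1 x2 :: real and \<alpha> \<beta> \<gamma> z1 z2 v2 :: complex
  assumes exp2: "\<And>\<zeta>. \<zeta> \<noteq> 0 \<Longrightarrow>
      eta2 \<sigma> \<gamma> \<zeta> = cnj z1 / \<zeta> + complex_of_real x1 - z1 * \<zeta>"
  and exp4: "\<And>\<zeta>. \<zeta> \<noteq> 0 \<Longrightarrow>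
      eta4 \<rho> \<alpha> \<beta> \<zeta> = cnj z2 / \<zeta>\<^sup>2 + cnj v2 / \<zeta> + complex_of_real x2 - v2 * \<zeta> + z2 * \<zeta>\<^sup>2"
  shows
   "let g_s2 = 4 * (cmod z1)\<^sup>2 + x1\<^sup>2;
        g_r2 = 4 * (cmod z2)\<^sup>2 + (cmod v2)\<^sup>2 + 1/3 * x2\<^sup>2;
        g_rs2 = complex_of_real (2/3 * x2 * (x1\<^sup>2 - 2 * (cmod z1)\<^sup>2))
                + 4 * z2 * (cnj z1)\<^sup>2 + 4 * cnj z2 * z1\<^sup>2
                + 2 * v2 * cnj z1 * complex_of_real x1 + 2 * cnj v2 * z1 * complex_of_real x1;
        g_r2s2 = complex_of_real ((8 * (cmod z2)\<^sup>2 - (cmod v2)\<^sup>2 - 2/3 * x2\<^sup>2) * (x1\<^sup>2 - 2 * (cmod z1)\<^sup>2))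
                - 12 * z2 * cnj v2 * cnj z1 * complex_of_real x1
                - 12 * cnj z2 * v2 * z1 * complex_of_real x1
                + 8 * z2 * complex_of_real x2 * (cnj z1)\<^sup>2
                + 8 * cnj z2 * complex_of_real x2 * z1\<^sup>2
                - 2 * v2 * complex_of_real x2 * cnj z1 * complex_of_real x1
                - 2 * cnj v2 * complex_of_real x2 * z1 * complex_of_real x1
                - 3 * v2\<^sup>2 * (cnj z1)\<^sup>2 - 3 * (cnj v2)\<^sup>2 * z1\<^sup>2;
        cag = cos (fs_dist \<alpha> \<gamma>); cbg = cos (fs_dist \<beta> \<gamma>); cab = cos (fs_dist \<alpha> \<beta>);
        Qp2 = (cag + cbg)\<^sup>2;
        Qm2 = (cag - cbg)\<^sup>2;
        Q02 = det (vector [vector [1, cag, cab], vector [cag, 1, cbg], vector [cab, cbg, 1]]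
                   :: real^3^3)
    in g_rs2 = complex_of_real (\<rho> * \<sigma>\<^sup>2 * (cag * cbg - 1/3 * cab))
     \<and> g_r2s2 = complex_of_real (g_r2 * g_s2 + 1/4 * \<rho>\<^sup>2 * \<sigma>\<^sup>2 * (Q02 - Qp2 - Qm2))"
proof -
  let ?cag = "cos (fs_dist \<alpha> \<gamma>)" and ?cbg = "cos (fs_dist \<beta> \<gamma>)" and ?cab = "cos (fs_dist \<alpha> \<beta>)"
  note coeffs = eta2_coeffs[OF exp2] eta4_coeffs[OF exp4]
  note unit = sphere_norm[of \<alpha>] sphere_norm[of \<beta>] sphere_norm[of \<gamma>]
  note cos = cos_fs_dist[of \<alpha> \<gamma>] cos_fs_dist[of \<beta> \<gamma>] cos_fs_dist[of \<alpha> \<beta>]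
  have g_s2: "4 * (cmod z1)\<^sup>2 + x1\<^sup>2 = \<sigma>\<^sup>2"
    using unit(3) coeffs(1,2) by (rule g_sigma2_eq)
  have g_r2: "4 * (cmod z2)\<^sup>2 + (cmod v2)\<^sup>2 + 1/3 * x2\<^sup>2 = \<rho>\<^sup>2 * (3 + ?cab\<^sup>2) / 12"
    using unit(1,2) coeffs(3-5) cos(3) by (rule g_rho2_eq)
  have cosines: "\<rho>\<^sup>2 * \<sigma>\<^sup>2 * (6 - 2 * ?cab\<^sup>2 + 6 * ?cag * ?cbg * ?cab - 9 * ?cag\<^sup>2 - 9 * ?cbg\<^sup>2) / 12
      = \<rho>\<^sup>2 * (3 + ?cab\<^sup>2) / 12 * \<sigma>\<^sup>2 + 1/4 * \<rho>\<^sup>2 * \<sigma>\<^sup>2 *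
        (det (vector [vector [1, ?cag, ?cab], vector [?cag, 1, ?cbg], vector [?cab, ?cbg, 1]] :: real^3^3)
         - (?cag + ?cbg)\<^sup>2 - (?cag - ?cbg)\<^sup>2)"
    unfolding det_3 vector_3 by (simp add: field_simps power2_eq_square)
  show ?thesis
    unfolding Let_def g_s2 g_r2 cosines[symmetric]
    using g_rho_sigma2_eq[OF unit coeffs cos] g_rho2_sigma2_eq[OF unit coeffs cos] by (rule conjI)
qed

end
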